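(* Let $k\ge1$, let $\alpha_1,\dots,\alpha_k>0$ and $\beta_1,\dots,\beta_k$ be real, and put $\gamma_j=\alpha_{j+1}+\alpha_{j+2}+\dots+\alpha_k+\beta_j+\beta_{j+1}+\dots+\beta_k$ for $j=1,\dots,k$; assume $\gamma_j>0$ for all $j$. Let $(x_1,\dots,x_k)$ have the joint density $$f_1(x_1,\dots,x_k)=C_1\,x_1^{\alpha_1-1}(1-x_1)^{\beta_1}x_2^{\alpha_2-1}(1-x_1-x_2)^{\beta_2}\cdots x_k^{\alpha_k-1}(1-x_1-\dots-x_k)^{\beta_k-1}$$ on $\{x_j>0,\ 0<x_1+\dots+x_j<1,\ j=1,\dots,k\}$ and $0$ elsewhere, where $C_1$ is the normalizing constant. Let $(v_1,\dots,v_k)$ be a vector of positive real random variables with an arbitrary joint density $f(v_1,\dots,v_k)$ on $(0,\infty)^k$, independent of $(x_1,\dots,x_k)$. Let $y_j=\dfrac{x_j}{1-x_1-\dots-x_{j-1}}$ (with denominator $1$ for $j=1$), let $u_j=v_j/y_j$, $j=1,\dots,k$, and let $g(u_1,\dots,u_k)$ be the joint density of $(u_1,\dots,u_k)$. Then, for (almost every) $(u_1,\dots,u_k)\in(0,\infty)^k$, $$I_{u_j,j=1,\dots,k}^{(\alpha_j,\gamma_j),j=1,\dots,k}f(u_1,\dots,u_k)=\Big\{\prod_{j=1}^k\frac{\Gamma(\alpha_j)}{\Gamma(\alpha_j+\gamma_j)}\Big\}g(u_1,\dots,u_k).$$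
   Context: The multivariable Kober fractional integral operator of the first kind is defined, for parameters $\zeta_j$ and $\alpha_j>0$, by $$I_{u_j,j=1,\dots,k}^{(\zeta_j,\alpha_j),j=1,\dots,k}f(u_1,\dots,u_k)=\Big\{\prod_{j=1}^k\frac{u_j^{-\zeta_j-\alpha_j}}{\Gamma(\alpha_j)}\Big\}\int_{0}^{u_1}\cdots\int_{0}^{u_k}\Big\{\prod_{j=1}^k(u_j-v_j)^{\alpha_j-1}v_j^{\zeta_j}\Big\}f(v_1,\dots,v_k)\,dv_1\cdots dv_k;$$ here it is applied with $\zeta_j=\alpha_j$ and $\alpha_j$ replaced by $\gamma_j$. *)

theory Defs
  imports "HOL-Probability.Probability"
begin

text \<open>Indices are 0-based: coordinates j = 0..k-1 correspond to the paper's j = 1..k.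
  Points of R^k are elements of the space of PiM {..<k} (\<lambda>_. lborel).\<close>

abbreviation RK :: "nat \<Rightarrow> (nat \<Rightarrow> real) measure" where
  "RK k \<equiv> PiM {..<k} (\<lambda>_. lborel)"

definition kgamma :: "nat \<Rightarrow> (nat \<Rightarrow> real) \<Rightarrow> (nat \<Rightarrow> real) \<Rightarrow> nat \<Rightarrow> real" where
  "kgamma k \<alpha> \<beta> j = (\<Sum>i\<in>{j<..<k}. \<alpha> i) + (\<Sum>i\<in>{j..<k}. \<beta> i)"

definition dens1 :: "nat \<Rightarrow> (nat \<Rightarrow> real) \<Rightarrow> (nat \<Rightarrow> real) \<Rightarrow> real \<Rightarrow> (nat \<Rightarrow> real) \<Rightarrow> real" where
  "dens1 k \<alpha> \<beta> C x =
     (if (\<forall>j<k. 0 < x j \<and> 0 < (\<Sum>i\<le>j. x i) \<and> (\<Sum>i\<le>j. x i) < 1)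
      then C * (\<Prod>j<k. x j powr (\<alpha> j - 1)
                  * (1 - (\<Sum>i\<le>j. x i)) powr (if j = k - 1 then \<beta> j - 1 else \<beta> j))
      else 0)"

definition kober :: "nat \<Rightarrow> (nat \<Rightarrow> real) \<Rightarrow> (nat \<Rightarrow> real) \<Rightarrow> ((nat \<Rightarrow> real) \<Rightarrow> real)
                      \<Rightarrow> (nat \<Rightarrow> real) \<Rightarrow> ennreal" where
  "kober k \<zeta> a f u =
     ennreal (\<Prod>j<k. u j powr (- \<zeta> j - a j) / Gamma (a j)) *
     (\<integral>\<^sup>+ v. indicator {v. \<forall>j<k. 0 < v j \<and> v j < u j} v *
        ennreal ((\<Prod>j<k. (u j - v j) powr (a j - 1) * v j powr (\<zeta> j)) * f v) \<partial>RK k)"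

end

theory Submission
  imports Defs
begin

text \<open>Integrating out the coordinates
  of \<open>x\<close> one at a time, starting with the last, shows that under \<open>f\<^sub>1\<close> the \<open>y j\<close> are independent
  with Beta\<open>(\<alpha> j, \<gamma> j)\<close> distributions; in particular \<open>C\<^sub>1 = 1 / (\<Prod>j. B(\<alpha> j, \<gamma> j))\<close>.
  For independent \<open>y\<close> and \<open>v\<close>, the vector \<open>u = v / y\<close> has density
  \<open>g(u) = \<integral> p(y) f(y u) \<Prod>j. y j dy\<close>, where \<open>p\<close> is the density of \<open>y\<close>, and the substitution
  \<open>v = y u\<close> identifies this integral with the Kober operator applied to \<open>f\<close>, up to the
  factor \<open>\<Prod>j. \<Gamma>(\<gamma> j)\<close>; the normalisation of \<open>C\<^sub>1\<close> turns that factor into the Gamma quotient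
  of the statement.\<close>

section \<open>Integrals over \<open>RK k\<close>\<close>

lemma product_sigma_finite_lborel: "product_sigma_finite (\<lambda>_::nat. lborel :: real measure)"
  by (simp add: product_sigma_finite_def lborel.sigma_finite_measure_axioms)

lemma sigma_finite_RK: "sigma_finite_measure (RK k)"
proof -
  interpret finite_product_sigma_finite "\<lambda>_. lborel :: real measure" "{..<k}"
    by (simp add: finite_product_sigma_finite_def finite_product_sigma_finite_axioms_def
        product_sigma_finite_lborel)
  show ?thesis by (rule sigma_finite_measure_axioms)
qed

lemma RK_Suc: "RK (Suc k) = PiM (insert k {..<k}) (\<lambda>_. lborel)"
  by (simp add: lessThan_Suc)

lemma measurable_fun_upd_RK [measurable]:
  "(\<lambda>(z, t). z(k := t)) \<in> measurable (RK k \<Otimes>\<^sub>M lborel) (RK (Suc k))"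
proof -
  have "(\<lambda>p. (fst p)(k := snd p)) \<in> measurable (RK k \<Otimes>\<^sub>M lborel) (RK (Suc k))"
    unfolding RK_Suc by (rule measurable_fun_upd[where J="{..<k}"]) auto
  then show ?thesis by (simp add: split_beta')
qed

lemma measurable_fun_upd_RK_point:
  assumes "z \<in> space (RK k)"
  shows "(\<lambda>t. z(k := t)) \<in> measurable borel (RK (Suc k))"
  unfolding RK_Suc by (rule measurable_fun_upd[where J="{..<k}"]) (use assms in auto)

lemma nn_integral_RK_Suc:
  assumes "F \<in> borel_measurable (RK (Suc k))"
  shows "integral\<^sup>N (RK (Suc k)) F = (\<integral>\<^sup>+z. (\<integral>\<^sup>+t. F (z(k := t)) \<partial>lborel) \<partial>RK k)"
  using product_sigma_finite.product_nn_integral_insert[OF product_sigma_finite_lborel,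
      of "{..<k}" k F] assms
  by (simp add: lessThan_Suc)

lemma nn_integral_RK_swap:
  assumes "case_prod F \<in> borel_measurable (RK k \<Otimes>\<^sub>M RK k)"
  shows "(\<integral>\<^sup>+a. (\<integral>\<^sup>+b. F a b \<partial>RK k) \<partial>RK k) = (\<integral>\<^sup>+b. (\<integral>\<^sup>+a. F a b \<partial>RK k) \<partial>RK k)"
  using pair_sigma_finite.Fubini'[OF _ assms] sigma_finite_RK
  by (simp add: pair_sigma_finite_def)

lemma nn_integral_RK_coordinatewise_subst:
  fixes \<phi> :: "nat \<Rightarrow> real \<Rightarrow> real" and w w' :: "nat \<Rightarrow> real \<Rightarrow> ennreal"
  assumes [measurable]: "\<And>j. \<phi> j \<in> borel_measurable borel"
    and [measurable]: "\<And>j. w j \<in> borel_measurable borel" "\<And>j. w' j \<in> borel_measurable borel"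
    and subst: "\<And>j G. j < k \<Longrightarrow> G \<in> borel_measurable borel \<Longrightarrow>
        (\<integral>\<^sup>+t. G (\<phi> j t) * w j t \<partial>lborel) = (\<integral>\<^sup>+t. G t * w' j t \<partial>lborel)"
    and "h \<in> borel_measurable (RK k)"
  shows "(\<integral>\<^sup>+y. h (\<lambda>j\<in>{..<k}. \<phi> j (y j)) * (\<Prod>j<k. w j (y j)) \<partial>RK k)
       = (\<integral>\<^sup>+u. h u * (\<Prod>j<k. w' j (u j)) \<partial>RK k)"
  using assms(5) subst
proof (induction k arbitrary: h)
  case 0
  then show ?case by (simp add: PiM_empty nn_integral_count_space_finite)
next
  case (Suc k)
  note [measurable] = Suc.prems(1)
  define H where "H z = (\<integral>\<^sup>+t. h (z(k := t)) * w' k t \<partial>lborel)" for z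
  have [measurable]: "H \<in> borel_measurable (RK k)"
    unfolding H_def by measurable
  have [measurable]: "(\<lambda>y. \<lambda>j\<in>{..<n}. \<phi> j (y j)) \<in> measurable (RK n) (RK n)" for n
    by measurable
  have restrict_upd: "(\<lambda>j\<in>{..<Suc k}. \<phi> j ((z(k := t)) j)) = (\<lambda>j\<in>{..<k}. \<phi> j (z j))(k := \<phi> k t)"
    for z t by (rule ext) (auto simp: restrict_def)
  have prod_upd: "(\<Prod>j<Suc k. W j ((z(k := t)) j)) = (\<Prod>j<k. W j (z j)) * W k t"
    for W :: "nat \<Rightarrow> real \<Rightarrow> ennreal" and z t by (simp add: prod.lessThan_Suc)
  have "(\<integral>\<^sup>+y. h (\<lambda>j\<in>{..<Suc k}. \<phi> j (y j)) * (\<Prod>j<Suc k. w j (y j)) \<partial>RK (Suc k))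
      = (\<integral>\<^sup>+z. (\<integral>\<^sup>+t. (\<Prod>j<k. w j (z j)) * (h ((\<lambda>j\<in>{..<k}. \<phi> j (z j))(k := \<phi> k t)) * w k t)
            \<partial>lborel) \<partial>RK k)"
    by (subst nn_integral_RK_Suc) (measurable, unfold restrict_upd prod_upd, simp only: mult_ac)
  also have "\<dots> = (\<integral>\<^sup>+z. H (\<lambda>j\<in>{..<k}. \<phi> j (z j)) * (\<Prod>j<k. w j (z j)) \<partial>RK k)"
  proof (rule nn_integral_cong)
    fix z assume "z \<in> space (RK k)"
    let ?Z = "\<lambda>j\<in>{..<k}. \<phi> j (z j)"
    have "?Z \<in> space (RK k)" by (simp add: space_PiM)
    from measurable_comp[OF measurable_fun_upd_RK_point[OF this] Suc.prems(1)]
    have h_upd [measurable]: "(\<lambda>s. h (?Z(k := s))) \<in> borel_measurable borel"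
      by (simp add: comp_def)
    have "(\<integral>\<^sup>+t. (\<Prod>j<k. w j (z j)) * (h (?Z(k := \<phi> k t)) * w k t) \<partial>lborel)
        = (\<Prod>j<k. w j (z j)) * (\<integral>\<^sup>+t. h (?Z(k := \<phi> k t)) * w k t \<partial>lborel)"
      by (rule nn_integral_cmult) measurable
    also have "\<dots> = (\<Prod>j<k. w j (z j)) * H ?Z"
      unfolding H_def Suc.prems(2)[OF lessI h_upd] ..
    finally show "(\<integral>\<^sup>+t. (\<Prod>j<k. w j (z j)) * (h (?Z(k := \<phi> k t)) * w k t) \<partial>lborel)
        = H ?Z * (\<Prod>j<k. w j (z j))"
      by (simp only: mult.commute)
  qed
  also have "\<dots> = (\<integral>\<^sup>+z. H z * (\<Prod>j<k. w' j (z j)) \<partial>RK k)"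
    by (rule Suc.IH) (use Suc.prems(2) in auto)
  also have "\<dots> = (\<integral>\<^sup>+z. (\<integral>\<^sup>+t. (\<Prod>j<k. w' j (z j)) * (h (z(k := t)) * w' k t) \<partial>lborel) \<partial>RK k)"
    by (intro nn_integral_cong, subst nn_integral_cmult) (simp_all add: H_def mult.commute)
  also have "\<dots> = (\<integral>\<^sup>+u. h u * (\<Prod>j<Suc k. w' j (u j)) \<partial>RK (Suc k))"
    by (subst nn_integral_RK_Suc) (measurable, simp only: prod_upd mult_ac)
  finally show ?case .
qed

lemma nn_integral_RK_scale:
  assumes "\<And>j. j < k \<Longrightarrow> c j \<noteq> 0" and "h \<in> borel_measurable (RK k)"
  shows "(\<integral>\<^sup>+y. h (\<lambda>j\<in>{..<k}. c j * y j) * (\<Prod>j<k. ennreal \<bar>c j\<bar>) \<partial>RK k) = (\<integral>\<^sup>+u. h u \<partial>RK k)"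
proof -
  have "(\<integral>\<^sup>+t. G (c j * t) * ennreal \<bar>c j\<bar> \<partial>lborel) = (\<integral>\<^sup>+t. G t * 1 \<partial>lborel)"
    if "j < k" and [measurable]: "G \<in> borel_measurable borel" for j G
  proof -
    have "(\<integral>\<^sup>+t. G (c j * t) * ennreal \<bar>c j\<bar> \<partial>lborel) = (\<integral>\<^sup>+t. G (0 + c j * t) \<partial>lborel) * ennreal \<bar>c j\<bar>"
      by (subst nn_integral_multc) simp_all
    also have "\<dots> = (\<integral>\<^sup>+t. G t \<partial>lborel)"
      using nn_integral_real_affine[of G "c j" 0] assms(1)[OF that(1)] by (simp add: mult.commute)
    finally show ?thesis by simp
  qed
  note one_dim = this
  have "(\<integral>\<^sup>+y. h (\<lambda>j\<in>{..<k}. c j * y j) * (\<Prod>j<k. ennreal \<bar>c j\<bar>) \<partial>RK k)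
      = (\<integral>\<^sup>+u. h u * (\<Prod>j<k. 1) \<partial>RK k)"
    by (rule nn_integral_RK_coordinatewise_subst[where \<phi>="\<lambda>j t. c j * t"
          and w="\<lambda>j _. ennreal \<bar>c j\<bar>" and w'="\<lambda>_ _. 1"])
       (use one_dim assms(2) in auto)
  then show ?thesis by simp
qed

section \<open>Beta densities\<close>

definition beta_density :: "real \<Rightarrow> real \<Rightarrow> real \<Rightarrow> real" where
  "beta_density a b y = (if 0 < y \<and> y < 1 then y powr (a - 1) * (1 - y) powr (b - 1) else 0)"

definition beta_product_density ::
    "nat \<Rightarrow> (nat \<Rightarrow> real) \<Rightarrow> (nat \<Rightarrow> real) \<Rightarrow> (nat \<Rightarrow> real) \<Rightarrow> real" where
  "beta_product_density k a b y = (\<Prod>j<k. beta_density (a j) (b j) (y j))"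

lemma beta_density_nonneg: "0 \<le> beta_density a b y"
  by (simp add: beta_density_def)

lemma borel_measurable_beta_density [measurable]: "beta_density a b \<in> borel_measurable borel"
  unfolding beta_density_def by measurable

lemma beta_product_density_nonneg: "0 \<le> beta_product_density k a b y"
  by (simp add: beta_product_density_def beta_density_nonneg prod_nonneg)

lemma borel_measurable_beta_product_density [measurable]:
  "beta_product_density k a b \<in> borel_measurable (RK k)"
  unfolding beta_product_density_def by measurable

lemma beta_product_density_eq_0: "j < k \<Longrightarrow> y j \<le> 0 \<Longrightarrow> beta_product_density k a b y = 0"
  unfolding beta_product_density_def
  by (intro prod_zero bexI[of _ j]) (auto simp: beta_density_def)

lemma Beta_real_pos: "0 < a \<Longrightarrow> 0 < b \<Longrightarrow> 0 < Beta a (b :: real)"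
  by (simp add: Beta_def)

lemma nn_integral_beta_density:
  assumes "0 < a" "0 < b"
  shows "(\<integral>\<^sup>+y. ennreal (beta_density a b y) \<partial>lborel) = ennreal (Beta a b)"
proof -
  have "beta_density a b y = indicator {0..1} y * (y powr (a - 1) * (1 - y) powr (b - 1))" for y
    by (cases "y = 0 \<or> y = 1") (auto simp: beta_density_def indicator_def)
  then show ?thesis
    using nn_integral_has_integral_lebesgue[OF _ has_integral_Beta_real[OF assms]] by simp
qed

lemma nn_integral_beta_product_density:
  assumes "\<And>j. j < k \<Longrightarrow> 0 < a j \<and> 0 < b j"
  shows "(\<integral>\<^sup>+y. ennreal (beta_product_density k a b y) \<partial>RK k) = ennreal (\<Prod>j<k. Beta (a j) (b j))"
proof -
  have "(\<integral>\<^sup>+y. ennreal (beta_product_density k a b y) \<partial>RK k)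
      = (\<integral>\<^sup>+y. (\<Prod>j<k. ennreal (beta_density (a j) (b j) (y j))) \<partial>RK k)"
    by (simp add: beta_product_density_def prod_ennreal beta_density_nonneg)
  also have "\<dots> = (\<Prod>j<k. ennreal (Beta (a j) (b j)))"
    by (subst product_sigma_finite.product_nn_integral_prod[OF product_sigma_finite_lborel])
       (simp_all add: nn_integral_beta_density assms)
  also have "\<dots> = ennreal (\<Prod>j<k. Beta (a j) (b j))"
    by (rule prod_ennreal) (simp add: assms Beta_real_pos less_imp_le)
  finally show ?thesis .
qed

lemma beta_density_dilate:
  assumes "0 < c"
  shows "(if 0 < c * y \<and> c * y < c then (c * y) powr (a - 1) * (c - c * y) powr (b - 1) else 0)
       = c powr (a + b - 2) * beta_density a b y"
proof (cases "0 < y \<and> y < 1")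
  case True
  have "c - c * y = c * (1 - y)" by (simp add: algebra_simps)
  moreover have "c powr (a - 1) * c powr (b - 1) = c powr (a + b - 2)"
    by (simp add: powr_add[symmetric])
  ultimately show ?thesis
    using assms True by (simp add: beta_density_def powr_mult mult_ac)
next
  case False
  with assms show ?thesis
    by (auto simp: beta_density_def zero_less_mult_iff)
qed

lemma beta_density_divide:
  assumes "0 < u"
  shows "beta_density a c (v / u) * (\<bar>v / u\<bar> / u)
       = (if 0 < v \<and> v < u then u powr (- a - c) * ((u - v) powr (c - 1) * v powr a) else 0)"
proof (cases "0 < v \<and> v < u")
  case True
  have "1 - v / u = (u - v) / u" using assms by (simp add: field_simps)
  then have "beta_density a c (v / u) * (\<bar>v / u\<bar> / u)
      = (v powr (a - 1) * v) * (u - v) powr (c - 1) / (u powr (a - 1) * u powr (c - 1) * u * u)"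
    using assms True by (simp add: beta_density_def powr_divide mult_ac)
  also have "\<dots> = (v powr (a - 1) * v) * (u - v) powr (c - 1) / (u powr (a + c - 2) * u * u)"
    by (simp add: powr_add[symmetric])
  also have "\<dots> = u powr (- a - c) * ((u - v) powr (c - 1) * v powr a)"
  proof -
    have v_pow: "v powr (a - 1) * v = v powr a"
      using True powr_mult_base[of v "a - 1"] by (simp add: mult.commute)
    have u_pow: "u powr (a + c - 2) * u * u = u powr (a + c)"
      using assms powr_mult_base[of u "a + c - 2"] powr_mult_base[of u "a + c - 1"]
      by (simp add: mult_ac)
    show ?thesis
      unfolding v_pow u_pow using powr_minus_divide[of u "a + c"] by (simp add: field_simps)
  qed
  finally show ?thesis using True by simp
next
  case False
  with assms have out: "\<not> (0 < v / u \<and> v / u < 1)"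
    by (auto simp: divide_less_eq zero_less_divide_iff)
  show ?thesis
    unfolding beta_density_def if_not_P[OF out] if_not_P[OF False] by simp
qed

lemma nn_integral_beta_density_dilate:
  fixes G :: "real \<Rightarrow> ennreal"
  assumes "0 < c" and [measurable]: "G \<in> borel_measurable borel"
  shows "(\<integral>\<^sup>+t. G (t / c) * ennreal (if 0 < t \<and> t < c then t powr (a - 1) * (c - t) powr (b - 1) else 0)
            \<partial>lborel)
       = ennreal (c powr (a + b - 1)) * (\<integral>\<^sup>+y. G y * ennreal (beta_density a b y) \<partial>lborel)"
  (is "(\<integral>\<^sup>+t. ?F t \<partial>lborel) = _")
proof -
  have "(\<integral>\<^sup>+t. ?F t \<partial>lborel) = ennreal \<bar>c\<bar> * (\<integral>\<^sup>+y. ?F (0 + c * y) \<partial>lborel)"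
    by (rule nn_integral_real_affine) (measurable, use assms(1) in simp)
  also have "\<dots> = ennreal c * (\<integral>\<^sup>+y. ennreal (c powr (a + b - 2)) * (G y * ennreal (beta_density a b y)) \<partial>lborel)"
  proof -
    have "?F (0 + c * y) = ennreal (c powr (a + b - 2)) * (G y * ennreal (beta_density a b y))" for y
      using assms(1) unfolding add_0_left beta_density_dilate[OF assms(1)]
      by (simp add: ennreal_mult beta_density_nonneg mult_ac)
    then show ?thesis using assms(1) by simp
  qed
  also have "\<dots> = ennreal c * (ennreal (c powr (a + b - 2)) * (\<integral>\<^sup>+y. G y * ennreal (beta_density a b y) \<partial>lborel))"
    by (rule arg_cong[where f="(*) (ennreal c)"], rule nn_integral_cmult) measurable
  also have "\<dots> = ennreal (c * c powr (a + b - 2)) * (\<integral>\<^sup>+y. G y * ennreal (beta_density a b y) \<partial>lborel)"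
    using assms(1) by (simp add: ennreal_mult mult.assoc)
  also have "c * c powr (a + b - 2) = c powr (a + b - 1)"
    using assms(1) by (simp add: powr_mult_base)
  finally show ?thesis .
qed

lemma beta_product_density_cong:
  "(\<And>j. j < k \<Longrightarrow> b j = b' j) \<Longrightarrow> beta_product_density k a b = beta_product_density k a b'"
  unfolding beta_product_density_def by (intro ext prod.cong) auto

lemma beta_product_density_Suc_fun_upd:
  "beta_product_density (Suc k) a b (y(k := t)) = beta_product_density k a b y * beta_density (a k) (b k) t"
  unfolding beta_product_density_def by (auto simp: prod.lessThan_Suc intro!: prod.cong)

lemma nn_integral_beta_product_density_Suc:
  assumes [measurable]: "h \<in> borel_measurable (RK (Suc k))"
  shows "(\<integral>\<^sup>+y. h y * ennreal (beta_product_density (Suc k) a b y) \<partial>RK (Suc k))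
       = (\<integral>\<^sup>+y. (\<integral>\<^sup>+t. h (y(k := t)) * ennreal (beta_density (a k) (b k) t) \<partial>lborel)
            * ennreal (beta_product_density k a b y) \<partial>RK k)"
proof -
  have "(\<integral>\<^sup>+y. h y * ennreal (beta_product_density (Suc k) a b y) \<partial>RK (Suc k))
      = (\<integral>\<^sup>+y. (\<integral>\<^sup>+t. h (y(k := t)) * ennreal (beta_product_density (Suc k) a b (y(k := t))) \<partial>lborel) \<partial>RK k)"
    by (rule nn_integral_RK_Suc) measurable
  also have "\<dots> = (\<integral>\<^sup>+y. (\<integral>\<^sup>+t. h (y(k := t)) * ennreal (beta_density (a k) (b k) t) \<partial>lborel)
            * ennreal (beta_product_density k a b y) \<partial>RK k)"
  proof (rule nn_integral_cong)
    fix y assume [measurable]: "y \<in> space (RK k)"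
    show "(\<integral>\<^sup>+t. h (y(k := t)) * ennreal (beta_product_density (Suc k) a b (y(k := t))) \<partial>lborel)
        = (\<integral>\<^sup>+t. h (y(k := t)) * ennreal (beta_density (a k) (b k) t) \<partial>lborel)
          * ennreal (beta_product_density k a b y)"
      by (subst nn_integral_multc[symmetric], measurable)
         (simp add: beta_product_density_Suc_fun_upd ennreal_mult beta_product_density_nonneg
           beta_density_nonneg mult_ac)
  qed
  finally show ?thesis .
qed

section \<open>Stick breaking\<close>

definition stick_break :: "nat \<Rightarrow> (nat \<Rightarrow> real) \<Rightarrow> nat \<Rightarrow> real" where
  "stick_break k x = (\<lambda>j\<in>{..<k}. x j / (1 - (\<Sum>i<j. x i)))"

definition dens1_support :: "nat \<Rightarrow> (nat \<Rightarrow> real) \<Rightarrow> bool" where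
  "dens1_support k x \<longleftrightarrow> (\<forall>j<k. 0 < x j \<and> 0 < (\<Sum>i\<le>j. x i) \<and> (\<Sum>i\<le>j. x i) < 1)"

definition dens1_core :: "nat \<Rightarrow> (nat \<Rightarrow> real) \<Rightarrow> (nat \<Rightarrow> real) \<Rightarrow> (nat \<Rightarrow> real) \<Rightarrow> real" where
  "dens1_core k \<alpha> \<beta> x = (\<Prod>j<k. x j powr (\<alpha> j - 1) * (1 - (\<Sum>i\<le>j. x i)) powr \<beta> j)"

lemma measurable_stick_break [measurable]: "stick_break k \<in> measurable (RK k) (RK k)"
  unfolding stick_break_def by measurable

lemma pred_dens1_support [measurable]: "Measurable.pred (RK k) (dens1_support k)"
proof -
  have "dens1_support k = (\<lambda>x. \<forall>j\<in>{..<k}. 0 < x j \<and> 0 < (\<Sum>i\<le>j. x i) \<and> (\<Sum>i\<le>j. x i) < 1)"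
    unfolding dens1_support_def by auto
  then show ?thesis by simp
qed

lemma dens1_altdef:
  "dens1 k \<alpha> \<beta> C x = (if dens1_support k x then C * (\<Prod>j<k. x j powr (\<alpha> j - 1)
      * (1 - (\<Sum>i\<le>j. x i)) powr (if j = k - 1 then \<beta> j - 1 else \<beta> j)) else 0)"
  unfolding dens1_def dens1_support_def ..

lemma borel_measurable_dens1 [measurable]: "dens1 k \<alpha> \<beta> C \<in> borel_measurable (RK k)"
  unfolding dens1_altdef by measurable

lemma dens1_eq_mult: "dens1 k \<alpha> \<beta> C x = C * dens1 k \<alpha> \<beta> 1 x"
  by (simp add: dens1_altdef)

lemma dens1_one_nonneg: "0 \<le> dens1 k \<alpha> \<beta> 1 x"
  by (simp add: dens1_altdef prod_nonneg)

lemma dens1_core_nonneg: "0 \<le> dens1_core k \<alpha> \<beta> x"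
  unfolding dens1_core_def by (intro prod_nonneg) auto

lemma dens1_support_imp_sum_less_1: "dens1_support k x \<Longrightarrow> (\<Sum>i<k. x i) < 1"
  by (cases k) (auto simp: dens1_support_def lessThan_Suc_atMost)

lemma sum_atMost_fun_upd_less: "(j :: nat) < k \<Longrightarrow> (\<Sum>i\<le>j. (x(k := t)) i) = (\<Sum>i\<le>j. x i)"
  by (rule sum.cong) (auto dest: leD)

lemma sum_lessThan_fun_upd: "(j :: nat) \<le> k \<Longrightarrow> (\<Sum>i<j. (x(k := t)) i) = (\<Sum>i<j. x i)"
  by (rule sum.cong) (auto dest: leD)

lemma sum_atMost_if_eq_same: "(\<Sum>i\<le>(k :: nat). if i = k then t else x i) = (\<Sum>i<k. x i) + t"
proof -
  have "(\<Sum>i<k. if i = k then t else x i) = (\<Sum>i<k. x i)" by (rule sum.cong) auto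
  then show ?thesis by (simp add: lessThan_Suc_atMost[symmetric] add.commute)
qed

lemma sum_atMost_fun_upd_same: "(\<Sum>i\<le>(k :: nat). (x(k := t)) i) = (\<Sum>i<k. x i) + t"
  using sum_atMost_if_eq_same[of k t x] by (simp add: fun_upd_def)

lemma dens1_support_Suc_fun_upd:
  "dens1_support (Suc k) (x(k := t)) \<longleftrightarrow> dens1_support k x \<and> 0 < t \<and> t < 1 - (\<Sum>i<k. x i)"
proof -
  have "0 \<le> (\<Sum>i<k. x i)" if "dens1_support k x"
    using that unfolding dens1_support_def by (intro sum_nonneg) (auto intro: less_imp_le)
  then show ?thesis
    unfolding dens1_support_def
    by (auto simp: less_Suc_eq sum_atMost_fun_upd_less sum_atMost_fun_upd_same sum_atMost_if_eq_same)
qed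

lemma dens1_Suc_fun_upd:
  "dens1 (Suc k) \<alpha> \<beta> 1 (x(k := t))
     = (if dens1_support k x \<and> 0 < t \<and> t < 1 - (\<Sum>i<k. x i)
        then dens1_core k \<alpha> \<beta> x * (t powr (\<alpha> k - 1) * (1 - (\<Sum>i<k. x i) - t) powr (\<beta> k - 1))
        else 0)"
proof -
  have "(\<Prod>j<Suc k. (x(k := t)) j powr (\<alpha> j - 1)
          * (1 - (\<Sum>i\<le>j. (x(k := t)) i)) powr (if j = Suc k - 1 then \<beta> j - 1 else \<beta> j))
      = dens1_core k \<alpha> \<beta> x * (t powr (\<alpha> k - 1) * (1 - (\<Sum>i<k. x i) - t) powr (\<beta> k - 1))"
    unfolding dens1_core_def prod.lessThan_Suc sum_atMost_fun_upd_same
    by (auto simp: sum_atMost_fun_upd_less sum_atMost_if_eq_same diff_diff_eq intro!: prod.cong)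
  then show ?thesis
    unfolding dens1_altdef dens1_support_Suc_fun_upd by (simp only: mult_1_left)
qed

text \<open>Integrating out the last coordinate over \<open>(0, 1 - (\<Sum>i<k. x i))\<close> produces the factor
  \<open>(1 - (\<Sum>i<k. x i)) powr (\<alpha> k + \<beta> k - 1)\<close>, which is absorbed by raising the exponent of
  the new last factor by \<open>\<alpha> k + \<beta> k\<close>; this is where the sums in \<open>kgamma\<close> come from.\<close>

lemma dens1_shift_last:
  assumes "dens1_support k x"
  shows "dens1 k \<alpha> (\<beta>(k - 1 := \<beta> (k - 1) + \<alpha> k + \<beta> k)) 1 x
       = dens1_core k \<alpha> \<beta> x * (1 - (\<Sum>i<k. x i)) powr (\<alpha> k + \<beta> k - 1)"
proof (cases k)
  case 0
  then show ?thesis using assms by (simp add: dens1_altdef dens1_core_def)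
next
  case (Suc m)
  have sum_eq: "(\<Sum>i\<le>m. x i) = (\<Sum>i<k. x i)"
    using Suc by (simp add: lessThan_Suc_atMost)
  have pos: "0 < 1 - (\<Sum>i<k. x i)"
    using dens1_support_imp_sum_less_1[OF assms] by simp
  have "(\<Prod>j<Suc m. x j powr (\<alpha> j - 1) * (1 - (\<Sum>i\<le>j. x i)) powr
          (if j = m then \<beta> m + \<alpha> (Suc m) + \<beta> (Suc m) - 1 else \<beta> j))
      = dens1_core m \<alpha> \<beta> x
        * (x m powr (\<alpha> m - 1) * (1 - (\<Sum>i\<le>m. x i)) powr (\<beta> m + \<alpha> (Suc m) + \<beta> (Suc m) - 1))"
    unfolding prod.lessThan_Suc dens1_core_def by (auto intro!: prod.cong)
  also have "\<dots> = dens1_core k \<alpha> \<beta> x * (1 - (\<Sum>i<k. x i)) powr (\<alpha> k + \<beta> k - 1)"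
    unfolding dens1_core_def Suc prod.lessThan_Suc using pos Suc sum_eq
    by (simp add: powr_add[symmetric] algebra_simps)
  finally show ?thesis
    using assms Suc by (simp add: dens1_altdef cong: if_cong)
qed

lemma kgamma_shift_last:
  assumes "j < k"
  shows "kgamma k \<alpha> (\<beta>(k - 1 := \<beta> (k - 1) + \<alpha> k + \<beta> k)) j = kgamma (Suc k) \<alpha> \<beta> j"
proof -
  have "\<beta>(k - 1 := \<beta> (k - 1) + \<alpha> k + \<beta> k) = (\<lambda>i. \<beta> i + (if i = k - 1 then \<alpha> k + \<beta> k else 0))"
    by auto
  moreover have "k - 1 \<in> {j..<k}" "{j<..<Suc k} = insert k {j<..<k}" "{j..<Suc k} = insert k {j..<k}"
    using assms by auto
  ultimately show ?thesis
    unfolding kgamma_def by (simp add: sum.distrib)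
qed

lemma kgamma_last: "kgamma (Suc k) \<alpha> \<beta> k = \<beta> k"
proof -
  have "{k<..<Suc k} = {}" "{k..<Suc k} = {k}" by auto
  then show ?thesis by (simp add: kgamma_def)
qed

lemma stick_break_Suc_fun_upd:
  "stick_break (Suc k) (x(k := t)) = (stick_break k x)(k := t / (1 - (\<Sum>i<k. x i)))"
  by (rule ext) (auto simp: stick_break_def sum_lessThan_fun_upd)

lemma nn_integral_dens1_last_coordinate:
  assumes h [measurable]: "h \<in> borel_measurable (RK (Suc k))" and x: "x \<in> space (RK k)"
  shows "(\<integral>\<^sup>+t. h (stick_break (Suc k) (x(k := t))) * ennreal (dens1 (Suc k) \<alpha> \<beta> 1 (x(k := t))) \<partial>lborel)
       = (\<integral>\<^sup>+s. h ((stick_break k x)(k := s)) * ennreal (beta_density (\<alpha> k) (\<beta> k) s) \<partial>lborel)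
         * ennreal (dens1 k \<alpha> (\<beta>(k - 1 := \<beta> (k - 1) + \<alpha> k + \<beta> k)) 1 x)"
proof (cases "dens1_support k x")
  case True
  define c where "c = 1 - (\<Sum>i<k. x i)"
  have c: "0 < c" using dens1_support_imp_sum_less_1[OF True] by (simp add: c_def)
  have "stick_break k x \<in> space (RK k)" using x by (rule measurable_space[OF measurable_stick_break])
  from measurable_comp[OF measurable_fun_upd_RK_point[OF this] h]
  have G [measurable]: "(\<lambda>s. h ((stick_break k x)(k := s))) \<in> borel_measurable borel"
    by (simp add: comp_def)
  have "(\<integral>\<^sup>+t. h (stick_break (Suc k) (x(k := t))) * ennreal (dens1 (Suc k) \<alpha> \<beta> 1 (x(k := t))) \<partial>lborel)
      = (\<integral>\<^sup>+t. ennreal (dens1_core k \<alpha> \<beta> x) * (h ((stick_break k x)(k := t / c))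
            * ennreal (if 0 < t \<and> t < c then t powr (\<alpha> k - 1) * (c - t) powr (\<beta> k - 1) else 0)) \<partial>lborel)"
    using True
    by (intro nn_integral_cong)
       (simp add: stick_break_Suc_fun_upd dens1_Suc_fun_upd c_def[symmetric] ennreal_mult
         dens1_core_nonneg mult_ac)
  also have "\<dots> = ennreal (dens1_core k \<alpha> \<beta> x) * (\<integral>\<^sup>+t. h ((stick_break k x)(k := t / c))
            * ennreal (if 0 < t \<and> t < c then t powr (\<alpha> k - 1) * (c - t) powr (\<beta> k - 1) else 0) \<partial>lborel)"
    by (rule nn_integral_cmult) measurable
  also have "\<dots> = ennreal (dens1_core k \<alpha> \<beta> x) * (ennreal (c powr (\<alpha> k + \<beta> k - 1))
            * (\<integral>\<^sup>+s. h ((stick_break k x)(k := s)) * ennreal (beta_density (\<alpha> k) (\<beta> k) s) \<partial>lborel))"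
    by (simp only: nn_integral_beta_density_dilate[OF c G])
  also have "\<dots> = (\<integral>\<^sup>+s. h ((stick_break k x)(k := s)) * ennreal (beta_density (\<alpha> k) (\<beta> k) s) \<partial>lborel)
         * ennreal (dens1 k \<alpha> (\<beta>(k - 1 := \<beta> (k - 1) + \<alpha> k + \<beta> k)) 1 x)"
    unfolding dens1_shift_last[OF True] c_def by (simp add: ennreal_mult dens1_core_nonneg mult_ac)
  finally show ?thesis .
next
  case False
  then show ?thesis unfolding dens1_Suc_fun_upd by (simp add: dens1_altdef)
qed

theorem nn_integral_stick_break:
  assumes "h \<in> borel_measurable (RK k)"
  shows "(\<integral>\<^sup>+x. h (stick_break k x) * ennreal (dens1 k \<alpha> \<beta> 1 x) \<partial>RK k)
       = (\<integral>\<^sup>+y. h y * ennreal (beta_product_density k \<alpha> (kgamma k \<alpha> \<beta>) y) \<partial>RK k)"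
  using assms
proof (induction k arbitrary: \<beta> h)
  case 0
  then show ?case
    by (simp add: PiM_empty nn_integral_count_space_finite dens1_altdef dens1_support_def
        stick_break_def beta_product_density_def)
next
  case (Suc k)
  note [measurable] = Suc.prems
  define \<beta>' where "\<beta>' = \<beta>(k - 1 := \<beta> (k - 1) + \<alpha> k + \<beta> k)"
  define H where "H z = (\<integral>\<^sup>+s. h (z(k := s)) * ennreal (beta_density (\<alpha> k) (\<beta> k) s) \<partial>lborel)" for z
  have [measurable]: "H \<in> borel_measurable (RK k)"
    unfolding H_def by measurable
  have kgamma_eq: "beta_product_density k \<alpha> (kgamma k \<alpha> \<beta>') = beta_product_density k \<alpha> (kgamma (Suc k) \<alpha> \<beta>)"
    unfolding \<beta>'_def by (rule beta_product_density_cong, rule kgamma_shift_last)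
  have "(\<integral>\<^sup>+x. h (stick_break (Suc k) x) * ennreal (dens1 (Suc k) \<alpha> \<beta> 1 x) \<partial>RK (Suc k))
      = (\<integral>\<^sup>+x. (\<integral>\<^sup>+t. h (stick_break (Suc k) (x(k := t))) * ennreal (dens1 (Suc k) \<alpha> \<beta> 1 (x(k := t)))
            \<partial>lborel) \<partial>RK k)"
    by (rule nn_integral_RK_Suc) measurable
  also have "\<dots> = (\<integral>\<^sup>+x. H (stick_break k x) * ennreal (dens1 k \<alpha> \<beta>' 1 x) \<partial>RK k)"
    by (intro nn_integral_cong) (simp add: nn_integral_dens1_last_coordinate H_def \<beta>'_def)
  also have "\<dots> = (\<integral>\<^sup>+y. H y * ennreal (beta_product_density k \<alpha> (kgamma k \<alpha> \<beta>') y) \<partial>RK k)"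
    by (rule Suc.IH) measurable
  also have "\<dots> = (\<integral>\<^sup>+y. H y * ennreal (beta_product_density k \<alpha> (kgamma (Suc k) \<alpha> \<beta>) y) \<partial>RK k)"
    unfolding kgamma_eq ..
  also have "\<dots> = (\<integral>\<^sup>+y. h y * ennreal (beta_product_density (Suc k) \<alpha> (kgamma (Suc k) \<alpha> \<beta>) y) \<partial>RK (Suc k))"
    unfolding nn_integral_beta_product_density_Suc[OF Suc.prems] H_def kgamma_last ..
  finally show ?case .
qed

lemma nn_integral_dens1:
  assumes "\<And>j. j < k \<Longrightarrow> 0 < \<alpha> j" and "\<And>j. j < k \<Longrightarrow> 0 < kgamma k \<alpha> \<beta> j"
  shows "(\<integral>\<^sup>+x. ennreal (dens1 k \<alpha> \<beta> C x) \<partial>RK k)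
       = ennreal C * ennreal (\<Prod>j<k. Beta (\<alpha> j) (kgamma k \<alpha> \<beta> j))"
proof -
  have "(\<integral>\<^sup>+x. ennreal (dens1 k \<alpha> \<beta> C x) \<partial>RK k) = ennreal C * (\<integral>\<^sup>+x. ennreal (dens1 k \<alpha> \<beta> 1 x) \<partial>RK k)"
    by (subst nn_integral_cmult[symmetric])
       (simp_all add: dens1_eq_mult[of k \<alpha> \<beta> C] ennreal_mult'' dens1_one_nonneg)
  also have "(\<integral>\<^sup>+x. ennreal (dens1 k \<alpha> \<beta> 1 x) \<partial>RK k)
      = (\<integral>\<^sup>+x. (\<lambda>_. 1) (stick_break k x) * ennreal (dens1 k \<alpha> \<beta> 1 x) \<partial>RK k)"
    by simp
  also have "\<dots> = (\<integral>\<^sup>+y. ennreal (beta_product_density k \<alpha> (kgamma k \<alpha> \<beta>) y) \<partial>RK k)"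
    by (subst nn_integral_stick_break) simp_all
  also have "\<dots> = ennreal (\<Prod>j<k. Beta (\<alpha> j) (kgamma k \<alpha> \<beta> j))"
    using assms by (intro nn_integral_beta_product_density) auto
  finally show ?thesis .
qed

lemma dens1_normalization:
  assumes "prob_space M" and "distributed M (RK k) x (\<lambda>z. ennreal (dens1 k \<alpha> \<beta> C z))"
    and "\<And>j. j < k \<Longrightarrow> 0 < \<alpha> j" and "\<And>j. j < k \<Longrightarrow> 0 < kgamma k \<alpha> \<beta> j"
  shows "C * (\<Prod>j<k. Beta (\<alpha> j) (kgamma k \<alpha> \<beta> j)) = 1"
proof -
  let ?B = "\<Prod>j<k. Beta (\<alpha> j) (kgamma k \<alpha> \<beta> j)"
  have B_pos: "0 < ?B"
    using assms(3,4) by (intro prod_pos) (simp add: Beta_real_pos)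
  have "prob_space (distr M (RK k) x)"
    using assms(2) by (intro prob_space.prob_space_distr[OF assms(1)]) (rule distributed_measurable)
  then have "prob_space (density (RK k) (\<lambda>z. ennreal (dens1 k \<alpha> \<beta> C z)))"
    by (simp only: distributed_distr_eq_density[OF assms(2)])
  from prob_space.emeasure_space_1[OF this]
  have "emeasure (density (RK k) (\<lambda>z. ennreal (dens1 k \<alpha> \<beta> C z))) (space (RK k)) = 1"
    by simp
  then have "ennreal C * ennreal ?B = 1"
    by (simp add: emeasure_density nn_integral_dens1 assms(3,4) cong: nn_integral_cong)
  moreover have "0 < C"
    using calculation ennreal_neg[of C] by (cases "0 < C") auto
  ultimately show ?thesis
    using B_pos by (simp add: ennreal_mult[symmetric])
qed

lemma distr_stick_break:
  assumes "distributed M (RK k) x (\<lambda>z. ennreal (dens1 k \<alpha> \<beta> C z))"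
  shows "distr M (RK k) (\<lambda>\<omega>. stick_break k (x \<omega>))
       = density (RK k) (\<lambda>y. ennreal (C * beta_product_density k \<alpha> (kgamma k \<alpha> \<beta>) y))"
proof (rule measure_eqI)
  fix A assume "A \<in> sets (distr M (RK k) (\<lambda>\<omega>. stick_break k (x \<omega>)))"
  then have [measurable]: "A \<in> sets (RK k)" by simp
  have [measurable]: "x \<in> measurable M (RK k)"
    using assms by (rule distributed_measurable)
  have "emeasure (distr M (RK k) (\<lambda>\<omega>. stick_break k (x \<omega>))) A
      = (\<integral>\<^sup>+y. indicator A y \<partial>distr M (RK k) (\<lambda>\<omega>. stick_break k (x \<omega>)))"
    by simp
  also have "\<dots> = (\<integral>\<^sup>+\<omega>. indicator A (stick_break k (x \<omega>)) \<partial>M)"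
    by (rule nn_integral_distr) measurable
  also have "\<dots> = (\<integral>\<^sup>+z. indicator A (stick_break k z) \<partial>distr M (RK k) x)"
    by (rule nn_integral_distr[symmetric]) measurable
  also have "\<dots> = (\<integral>\<^sup>+z. ennreal (dens1 k \<alpha> \<beta> C z) * indicator A (stick_break k z) \<partial>RK k)"
    unfolding distributed_distr_eq_density[OF assms] by (rule nn_integral_density) measurable
  also have "\<dots> = ennreal C * (\<integral>\<^sup>+z. indicator A (stick_break k z) * ennreal (dens1 k \<alpha> \<beta> 1 z) \<partial>RK k)"
    by (subst nn_integral_cmult[symmetric], measurable)
       (simp add: dens1_eq_mult[of k \<alpha> \<beta> C] ennreal_mult'' dens1_one_nonneg mult_ac)
  also have "\<dots> = ennreal C * (\<integral>\<^sup>+y. indicator A y * ennreal (beta_product_density k \<alpha> (kgamma k \<alpha> \<beta>) y) \<partial>RK k)"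
    by (subst nn_integral_stick_break) simp_all
  also have "\<dots> = emeasure (density (RK k) (\<lambda>y. ennreal (C * beta_product_density k \<alpha> (kgamma k \<alpha> \<beta>) y))) A"
    by (subst nn_integral_cmult[symmetric], measurable)
       (simp add: emeasure_density ennreal_mult'' beta_product_density_nonneg mult_ac)
  finally show "emeasure (distr M (RK k) (\<lambda>\<omega>. stick_break k (x \<omega>))) A
      = emeasure (density (RK k) (\<lambda>y. ennreal (C * beta_product_density k \<alpha> (kgamma k \<alpha> \<beta>) y))) A" .
qed simp

section \<open>Coordinatewise quotients of independent random vectors\<close>

lemma distributed_nonneg_density_measurable:
  assumes "distributed M N X (\<lambda>z. ennreal (f z))" and "\<And>z. 0 \<le> f z"
  shows "f \<in> borel_measurable N"
proof -
  have [measurable]: "(\<lambda>z. ennreal (f z)) \<in> borel_measurable N"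
    using assms(1) by (rule distributed_borel_measurable)
  have "(\<lambda>z. enn2real (ennreal (f z))) \<in> borel_measurable N"
    by measurable
  with assms(2) show ?thesis by simp
qed

lemma (in prob_space) nn_integral_indep_var_density:
  assumes "indep_var N1 X N2 Y"
    and "distr M N1 X = density N1 p" and "distr M N2 Y = density N2 q"
    and [measurable]: "p \<in> borel_measurable N1" "q \<in> borel_measurable N2"
      "case_prod F \<in> borel_measurable (N1 \<Otimes>\<^sub>M N2)"
  shows "(\<integral>\<^sup>+\<omega>. F (X \<omega>) (Y \<omega>) \<partial>M) = (\<integral>\<^sup>+a. p a * (\<integral>\<^sup>+b. q b * F a b \<partial>N2) \<partial>N1)"
proof -
  have [measurable]: "X \<in> measurable M N1" "Y \<in> measurable M N2"
    using indep_var_rv1[OF assms(1)] indep_var_rv2[OF assms(1)] by auto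
  have "prob_space (density N1 p)" "prob_space (density N2 q)"
    unfolding assms(2,3)[symmetric] by (auto intro!: prob_space_distr)
  then interpret D: pair_sigma_finite "density N1 p" "density N2 q"
    by (simp add: pair_sigma_finite_def prob_space_imp_sigma_finite)
  have "(\<integral>\<^sup>+\<omega>. F (X \<omega>) (Y \<omega>) \<partial>M) = (\<integral>\<^sup>+z. case_prod F z \<partial>distr M (N1 \<Otimes>\<^sub>M N2) (\<lambda>\<omega>. (X \<omega>, Y \<omega>)))"
    by (subst nn_integral_distr) simp_all
  also have "distr M (N1 \<Otimes>\<^sub>M N2) (\<lambda>\<omega>. (X \<omega>, Y \<omega>)) = density N1 p \<Otimes>\<^sub>M density N2 q"
    using assms(1-3) by (simp add: indep_var_distribution_eq)
  also have "(\<integral>\<^sup>+z. case_prod F z \<partial>(density N1 p \<Otimes>\<^sub>M density N2 q))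
      = (\<integral>\<^sup>+a. (\<integral>\<^sup>+b. F a b \<partial>density N2 q) \<partial>density N1 p)"
    by (subst D.M2.nn_integral_fst[symmetric]) simp_all
  also have "\<dots> = (\<integral>\<^sup>+a. p a * (\<integral>\<^sup>+b. F a b \<partial>density N2 q) \<partial>N1)"
    by (rule nn_integral_density) measurable
  also have "\<dots> = (\<integral>\<^sup>+a. p a * (\<integral>\<^sup>+b. q b * F a b \<partial>N2) \<partial>N1)"
  proof (rule nn_integral_cong)
    fix a assume [measurable]: "a \<in> space N1"
    have "(\<integral>\<^sup>+b. F a b \<partial>density N2 q) = (\<integral>\<^sup>+b. q b * F a b \<partial>N2)"
      by (rule nn_integral_density) measurable
    then show "p a * (\<integral>\<^sup>+b. F a b \<partial>density N2 q) = p a * (\<integral>\<^sup>+b. q b * F a b \<partial>N2)"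
      by simp
  qed
  finally show ?thesis .
qed

text \<open>By the hypothesis on \<open>p\<close>, almost every value of \<open>Y\<close> has no zero coordinate, which is what the
  change of variables \<open>b = y * u\<close> needs; elsewhere the HOL convention \<open>x / 0 = 0\<close> applies.\<close>

theorem distr_coordinatewise_quotient:
  assumes "prob_space M" and "prob_space.indep_var M (RK k) Y (RK k) V"
    and "distr M (RK k) Y = density (RK k) p" and "distr M (RK k) V = density (RK k) q"
    and [measurable]: "p \<in> borel_measurable (RK k)" "q \<in> borel_measurable (RK k)"
    and p_zero: "\<And>y j. j < k \<Longrightarrow> y j = 0 \<Longrightarrow> p y = 0"
  shows "distr M (RK k) (\<lambda>\<omega>. \<lambda>j\<in>{..<k}. V \<omega> j / Y \<omega> j)
       = density (RK k) (\<lambda>u. \<integral>\<^sup>+y. p y * q (\<lambda>j\<in>{..<k}. y j * u j) * ennreal (\<Prod>j<k. \<bar>y j\<bar>) \<partial>RK k)"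
proof (rule measure_eqI)
  interpret prob_space M by (rule assms(1))
  have [measurable]: "Y \<in> measurable M (RK k)" "V \<in> measurable M (RK k)"
    using indep_var_rv1[OF assms(2)] indep_var_rv2[OF assms(2)] by auto
  have "(\<lambda>(y, b). \<lambda>j\<in>{..<k}. b j / y j) \<in> measurable (RK k \<Otimes>\<^sub>M RK k) (RK k)"
    by measurable
  from measurable_compose[OF measurable_Pair[of Y M "RK k" V "RK k"] this]
  have [measurable]: "(\<lambda>\<omega>. \<lambda>j\<in>{..<k}. V \<omega> j / Y \<omega> j) \<in> measurable M (RK k)"
    by simp
  interpret RK: sigma_finite_measure "RK k" by (rule sigma_finite_RK)
  have density_measurable:
    "(\<lambda>u. \<integral>\<^sup>+y. p y * q (\<lambda>j\<in>{..<k}. y j * u j) * ennreal (\<Prod>j<k. \<bar>y j\<bar>) \<partial>RK k) \<in> borel_measurable (RK k)"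
    by measurable
  fix A assume "A \<in> sets (distr M (RK k) (\<lambda>\<omega>. \<lambda>j\<in>{..<k}. V \<omega> j / Y \<omega> j))"
  then have [measurable]: "A \<in> sets (RK k)" by simp
  define K where "K y u = p y * q (\<lambda>j\<in>{..<k}. y j * u j) * ennreal (\<Prod>j<k. \<bar>y j\<bar>) * indicator A u"
    for y u
  have [measurable]: "case_prod K \<in> borel_measurable (RK k \<Otimes>\<^sub>M RK k)"
    unfolding K_def by measurable
  have "emeasure (distr M (RK k) (\<lambda>\<omega>. \<lambda>j\<in>{..<k}. V \<omega> j / Y \<omega> j)) A
      = (\<integral>\<^sup>+u. indicator A u \<partial>distr M (RK k) (\<lambda>\<omega>. \<lambda>j\<in>{..<k}. V \<omega> j / Y \<omega> j))"
    by simp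
  also have "\<dots> = (\<integral>\<^sup>+\<omega>. indicator A (\<lambda>j\<in>{..<k}. V \<omega> j / Y \<omega> j) \<partial>M)"
    by (rule nn_integral_distr) measurable
  also have "\<dots> = (\<integral>\<^sup>+y. p y * (\<integral>\<^sup>+b. q b * indicator A (\<lambda>j\<in>{..<k}. b j / y j) \<partial>RK k) \<partial>RK k)"
    by (rule nn_integral_indep_var_density[OF assms(2-4), where F="\<lambda>y b. indicator A (\<lambda>j\<in>{..<k}. b j / y j)"])
       measurable
  also have "\<dots> = (\<integral>\<^sup>+y. (\<integral>\<^sup>+u. K y u \<partial>RK k) \<partial>RK k)"
  proof (rule nn_integral_cong)
    fix y assume y [measurable]: "y \<in> space (RK k)"
    show "p y * (\<integral>\<^sup>+b. q b * indicator A (\<lambda>j\<in>{..<k}. b j / y j) \<partial>RK k) = (\<integral>\<^sup>+u. K y u \<partial>RK k)"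
    proof (cases "\<forall>j<k. y j \<noteq> 0")
      case True
      have scale_back: "(\<lambda>j\<in>{..<k}. (\<lambda>j\<in>{..<k}. y j * u j) j / y j) = u" if "u \<in> space (RK k)" for u
        using that True by (auto simp: space_PiM PiE_def extensional_def fun_eq_iff)
      have "(\<integral>\<^sup>+b. q b * indicator A (\<lambda>j\<in>{..<k}. b j / y j) \<partial>RK k)
          = (\<integral>\<^sup>+u. q (\<lambda>j\<in>{..<k}. y j * u j)
              * indicator A (\<lambda>j\<in>{..<k}. (\<lambda>j\<in>{..<k}. y j * u j) j / y j) * (\<Prod>j<k. ennreal \<bar>y j\<bar>) \<partial>RK k)"
        using True by (subst nn_integral_RK_scale[symmetric, where c=y]) simp_all
      also have "\<dots> = (\<integral>\<^sup>+u. q (\<lambda>j\<in>{..<k}. y j * u j) * indicator A u * (\<Prod>j<k. ennreal \<bar>y j\<bar>) \<partial>RK k)"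
        by (intro nn_integral_cong) (simp only: scale_back)
      finally show ?thesis
        unfolding K_def
        by (simp add: nn_integral_cmult[symmetric] prod_ennreal[symmetric] mult_ac)
    next
      case False
      then show ?thesis by (auto simp: K_def p_zero)
    qed
  qed
  also have "\<dots> = (\<integral>\<^sup>+u. (\<integral>\<^sup>+y. K y u \<partial>RK k) \<partial>RK k)"
    by (rule nn_integral_RK_swap) measurable
  also have "\<dots> = emeasure (density (RK k)
      (\<lambda>u. \<integral>\<^sup>+y. p y * q (\<lambda>j\<in>{..<k}. y j * u j) * ennreal (\<Prod>j<k. \<bar>y j\<bar>) \<partial>RK k)) A"
    unfolding K_def by (subst emeasure_density) (simp_all add: density_measurable nn_integral_multc)
  finally show "emeasure (distr M (RK k) (\<lambda>\<omega>. \<lambda>j\<in>{..<k}. V \<omega> j / Y \<omega> j)) A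
      = emeasure (density (RK k)
          (\<lambda>u. \<integral>\<^sup>+y. p y * q (\<lambda>j\<in>{..<k}. y j * u j) * ennreal (\<Prod>j<k. \<bar>y j\<bar>) \<partial>RK k)) A" .
qed simp

section \<open>The Kober operator as a Beta mixture\<close>

lemma beta_product_density_rescale:
  assumes "\<And>j. j < k \<Longrightarrow> 0 < u j"
  shows "beta_product_density k \<zeta> a (\<lambda>j\<in>{..<k}. 1 / u j * v j)
          * (\<Prod>j<k. \<bar>(\<lambda>j\<in>{..<k}. 1 / u j * v j) j\<bar>) * (\<Prod>j<k. \<bar>1 / u j\<bar>)
       = (if \<forall>j<k. 0 < v j \<and> v j < u j
          then (\<Prod>j<k. u j powr (- \<zeta> j - a j)) * (\<Prod>j<k. (u j - v j) powr (a j - 1) * v j powr \<zeta> j)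
          else 0)"
proof -
  have "beta_product_density k \<zeta> a (\<lambda>j\<in>{..<k}. 1 / u j * v j)
          * (\<Prod>j<k. \<bar>(\<lambda>j\<in>{..<k}. 1 / u j * v j) j\<bar>) * (\<Prod>j<k. \<bar>1 / u j\<bar>)
      = (\<Prod>j<k. beta_density (\<zeta> j) (a j) (v j / u j) * (\<bar>v j / u j\<bar> / u j))"
    unfolding beta_product_density_def mult.assoc prod.distrib[symmetric]
    using assms by (intro prod.cong) (auto simp: abs_mult abs_of_pos)
  also have "\<dots> = (\<Prod>j<k. if 0 < v j \<and> v j < u j
      then u j powr (- \<zeta> j - a j) * ((u j - v j) powr (a j - 1) * v j powr \<zeta> j) else 0)"
    by (intro prod.cong refl beta_density_divide) (simp add: assms)
  also have "\<dots> = (if \<forall>j<k. 0 < v j \<and> v j < u j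
          then (\<Prod>j<k. u j powr (- \<zeta> j - a j)) * (\<Prod>j<k. (u j - v j) powr (a j - 1) * v j powr \<zeta> j)
          else 0)"
    by (auto simp: prod.distrib[symmetric] intro!: prod_zero prod.cong)
  finally show ?thesis .
qed

text \<open>The substitution \<open>v j = y j * u j\<close> turns the Kober integral into an average of \<open>f\<close> over
  dilations of \<open>u\<close> by independent Beta\<open>(\<zeta> j, a j)\<close> factors.\<close>

theorem kober_eq_beta_mixture:
  assumes u: "\<And>j. j < k \<Longrightarrow> 0 < u j" and [measurable]: "f \<in> borel_measurable (RK k)"
    and f_nonneg: "\<And>z. 0 \<le> f z"
  shows "kober k \<zeta> a f u = ennreal (\<Prod>j<k. 1 / Gamma (a j))
    * (\<integral>\<^sup>+y. ennreal (beta_product_density k \<zeta> a y * f (\<lambda>j\<in>{..<k}. y j * u j) * (\<Prod>j<k. \<bar>y j\<bar>)) \<partial>RK k)"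
proof -
  define U where "U = (\<Prod>j<k. u j powr (- \<zeta> j - a j))"
  define W where "W v = (\<Prod>j<k. (u j - v j) powr (a j - 1) * v j powr \<zeta> j)" for v
  define S where "S = {v. \<forall>j<k. 0 < v j \<and> v j < u j}"
  have "(\<lambda>v. v \<in> S) = (\<lambda>v. \<forall>j\<in>{..<k}. 0 < v j \<and> v j < u j)"
    by (auto simp: S_def)
  then have [measurable]: "Measurable.pred (RK k) (\<lambda>v. v \<in> S)"
    by simp
  have "(\<integral>\<^sup>+y. ennreal (beta_product_density k \<zeta> a y * f (\<lambda>j\<in>{..<k}. y j * u j) * (\<Prod>j<k. \<bar>y j\<bar>)) \<partial>RK k)
      = (\<integral>\<^sup>+v. ennreal (beta_product_density k \<zeta> a (\<lambda>j\<in>{..<k}. 1 / u j * v j)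
            * f (\<lambda>j\<in>{..<k}. (\<lambda>j\<in>{..<k}. 1 / u j * v j) j * u j)
            * (\<Prod>j<k. \<bar>(\<lambda>j\<in>{..<k}. 1 / u j * v j) j\<bar>)) * (\<Prod>j<k. ennreal \<bar>1 / u j\<bar>) \<partial>RK k)"
    using u by (subst nn_integral_RK_scale[symmetric, where c="\<lambda>j. 1 / u j"]) (auto simp: less_imp_neq[symmetric])
  also have "\<dots> = (\<integral>\<^sup>+v. ennreal U * (indicator S v * ennreal (W v * f v)) \<partial>RK k)"
  proof (rule nn_integral_cong)
    fix v assume v: "v \<in> space (RK k)"
    have scale_back: "(\<lambda>j\<in>{..<k}. (\<lambda>j\<in>{..<k}. 1 / u j * v j) j * u j) = v"
      using v u by (auto simp: space_PiM PiE_def extensional_def fun_eq_iff less_imp_neq[symmetric])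
    let ?y = "\<lambda>j\<in>{..<k}. 1 / u j * v j"
    have "beta_product_density k \<zeta> a ?y * f v * (\<Prod>j<k. \<bar>?y j\<bar>) * (\<Prod>j<k. \<bar>1 / u j\<bar>)
        = beta_product_density k \<zeta> a ?y * (\<Prod>j<k. \<bar>?y j\<bar>) * (\<Prod>j<k. \<bar>1 / u j\<bar>) * f v"
      by (simp only: mult_ac)
    also have "\<dots> = (if v \<in> S then U * (W v * f v) else 0)"
      by (subst beta_product_density_rescale) (auto simp: u S_def U_def W_def)
    finally have real_eq: "beta_product_density k \<zeta> a ?y * f v * (\<Prod>j<k. \<bar>?y j\<bar>) * (\<Prod>j<k. \<bar>1 / u j\<bar>)
        = (if v \<in> S then U * (W v * f v) else 0)" .
    have "0 \<le> U" by (simp add: U_def prod_nonneg)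
    then show "ennreal (beta_product_density k \<zeta> a ?y * f (\<lambda>j\<in>{..<k}. ?y j * u j) * (\<Prod>j<k. \<bar>?y j\<bar>))
          * (\<Prod>j<k. ennreal \<bar>1 / u j\<bar>)
        = ennreal U * (indicator S v * ennreal (W v * f v))"
      unfolding scale_back prod_ennreal[OF abs_ge_zero]
        ennreal_mult''[OF prod_nonneg[OF abs_ge_zero], symmetric] real_eq
      by (simp add: ennreal_mult' indicator_def)
  qed
  also have "\<dots> = ennreal U * (\<integral>\<^sup>+v. indicator S v * ennreal (W v * f v) \<partial>RK k)"
    unfolding W_def by (rule nn_integral_cmult) measurable
  finally have "(\<integral>\<^sup>+y. ennreal (beta_product_density k \<zeta> a y * f (\<lambda>j\<in>{..<k}. y j * u j)
      * (\<Prod>j<k. \<bar>y j\<bar>)) \<partial>RK k) = ennreal U * (\<integral>\<^sup>+v. indicator S v * ennreal (W v * f v) \<partial>RK k)" .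
  moreover have "(\<Prod>j<k. u j powr (- \<zeta> j - a j) / Gamma (a j)) = (\<Prod>j<k. 1 / Gamma (a j)) * U"
    by (simp add: U_def prod.distrib[symmetric])
  moreover have "0 \<le> U" by (simp add: U_def prod_nonneg)
  ultimately show ?thesis
    unfolding kober_def S_def[symmetric] W_def[symmetric] by (simp add: ennreal_mult'' mult.assoc)
qed

lemma distr_ratio_stick_break:
  assumes "prob_space M"
    and dist_x: "distributed M (RK k) x (\<lambda>z. ennreal (dens1 k \<alpha> \<beta> C z))"
    and f_nonneg: "\<And>z. 0 \<le> f z" and dist_v: "distributed M (RK k) v (\<lambda>z. ennreal (f z))"
    and "prob_space.indep_var M (RK k) x (RK k) v"
  shows "distr M (RK k) (\<lambda>\<omega>. \<lambda>j\<in>{..<k}. v \<omega> j / (x \<omega> j / (1 - (\<Sum>i<j. x \<omega> i))))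
       = density (RK k) (\<lambda>u. ennreal C * (\<integral>\<^sup>+y. ennreal (beta_product_density k \<alpha> (kgamma k \<alpha> \<beta>) y
            * f (\<lambda>j\<in>{..<k}. y j * u j) * (\<Prod>j<k. \<bar>y j\<bar>)) \<partial>RK k))"
proof -
  interpret prob_space M by fact
  have [measurable]: "f \<in> borel_measurable (RK k)"
    using dist_v f_nonneg by (rule distributed_nonneg_density_measurable)
  have "(\<lambda>j\<in>{..<k}. v \<omega> j / (x \<omega> j / (1 - (\<Sum>i<j. x \<omega> i))))
      = (\<lambda>j\<in>{..<k}. v \<omega> j / stick_break k (x \<omega>) j)" for \<omega>
    by (intro restrict_cong refl) (simp add: stick_break_def)
  then have "distr M (RK k) (\<lambda>\<omega>. \<lambda>j\<in>{..<k}. v \<omega> j / (x \<omega> j / (1 - (\<Sum>i<j. x \<omega> i))))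
      = distr M (RK k) (\<lambda>\<omega>. \<lambda>j\<in>{..<k}. v \<omega> j / stick_break k (x \<omega>) j)"
    by (simp only:)
  also have "\<dots> = density (RK k) (\<lambda>u. \<integral>\<^sup>+y. ennreal (C * beta_product_density k \<alpha> (kgamma k \<alpha> \<beta>) y)
          * ennreal (f (\<lambda>j\<in>{..<k}. y j * u j)) * ennreal (\<Prod>j<k. \<bar>y j\<bar>) \<partial>RK k)"
  proof (rule distr_coordinatewise_quotient[OF assms(1)])
    show "indep_var (RK k) (\<lambda>\<omega>. stick_break k (x \<omega>)) (RK k) v"
      using indep_var_compose[OF assms(5), of "stick_break k" "RK k" id "RK k"] by (simp add: comp_def)
    show "distr M (RK k) (\<lambda>\<omega>. stick_break k (x \<omega>))
        = density (RK k) (\<lambda>y. ennreal (C * beta_product_density k \<alpha> (kgamma k \<alpha> \<beta>) y))"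
      by (rule distr_stick_break[OF dist_x])
    show "distr M (RK k) v = density (RK k) (\<lambda>z. ennreal (f z))"
      by (rule distributed_distr_eq_density[OF dist_v])
    show "ennreal (C * beta_product_density k \<alpha> (kgamma k \<alpha> \<beta>) y) = 0" if "j < k" "y j = 0" for y j
      using beta_product_density_eq_0[of j k y] that by simp
  qed measurable
  also have "(\<lambda>u. \<integral>\<^sup>+y. ennreal (C * beta_product_density k \<alpha> (kgamma k \<alpha> \<beta>) y)
          * ennreal (f (\<lambda>j\<in>{..<k}. y j * u j)) * ennreal (\<Prod>j<k. \<bar>y j\<bar>) \<partial>RK k)
      = (\<lambda>u. ennreal C * (\<integral>\<^sup>+y. ennreal (beta_product_density k \<alpha> (kgamma k \<alpha> \<beta>) y
            * f (\<lambda>j\<in>{..<k}. y j * u j) * (\<Prod>j<k. \<bar>y j\<bar>)) \<partial>RK k))"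
    by (intro ext, subst nn_integral_cmult[symmetric], measurable)
       (simp add: ennreal_mult'' ennreal_mult beta_product_density_nonneg f_nonneg prod_nonneg mult.assoc)
  finally show ?thesis .
qed

lemma AE_ratio_density_eq:
  assumes "prob_space M"
    and "distributed M (RK k) x (\<lambda>z. ennreal (dens1 k \<alpha> \<beta> C z))"
    and f_nonneg: "\<And>z. 0 \<le> f z" and dist_v: "distributed M (RK k) v (\<lambda>z. ennreal (f z))"
    and "prob_space.indep_var M (RK k) x (RK k) v"
    and dist_g: "distributed M (RK k) (\<lambda>\<omega>. \<lambda>j\<in>{..<k}. v \<omega> j / (x \<omega> j / (1 - (\<Sum>i<j. x \<omega> i))))
      (\<lambda>z. ennreal (g z))"
  shows "AE u in RK k. ennreal (g u) = ennreal C * (\<integral>\<^sup>+y. ennreal (beta_product_density k \<alpha> (kgamma k \<alpha> \<beta>) y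
            * f (\<lambda>j\<in>{..<k}. y j * u j) * (\<Prod>j<k. \<bar>y j\<bar>)) \<partial>RK k)"
proof (rule sigma_finite_measure.density_unique[OF sigma_finite_RK])
  interpret sigma_finite_measure "RK k" by (rule sigma_finite_RK)
  have [measurable]: "f \<in> borel_measurable (RK k)"
    using dist_v f_nonneg by (rule distributed_nonneg_density_measurable)
  show "(\<lambda>u. ennreal C * (\<integral>\<^sup>+y. ennreal (beta_product_density k \<alpha> (kgamma k \<alpha> \<beta>) y
      * f (\<lambda>j\<in>{..<k}. y j * u j) * (\<Prod>j<k. \<bar>y j\<bar>)) \<partial>RK k)) \<in> borel_measurable (RK k)"
    by measurable
  show "density (RK k) (\<lambda>u. ennreal (g u)) = density (RK k) (\<lambda>u. ennreal C * (\<integral>\<^sup>+y.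
      ennreal (beta_product_density k \<alpha> (kgamma k \<alpha> \<beta>) y * f (\<lambda>j\<in>{..<k}. y j * u j) * (\<Prod>j<k. \<bar>y j\<bar>)) \<partial>RK k))"
    using distr_ratio_stick_break[OF assms(1-5)] distributed_distr_eq_density[OF dist_g] by simp
qed (rule distributed_borel_measurable[OF dist_g])

lemma prod_Gamma_ratio_mult_eq:
  fixes \<alpha> \<gamma> :: "nat \<Rightarrow> real"
  assumes "\<And>j. j < k \<Longrightarrow> 0 < \<alpha> j" and "\<And>j. j < k \<Longrightarrow> 0 < \<gamma> j"
    and "C * (\<Prod>j<k. Beta (\<alpha> j) (\<gamma> j)) = 1"
  shows "(\<Prod>j<k. Gamma (\<alpha> j) / Gamma (\<alpha> j + \<gamma> j)) * C = (\<Prod>j<k. 1 / Gamma (\<gamma> j))"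
proof -
  have "(\<Prod>j<k. Beta (\<alpha> j) (\<gamma> j)) \<noteq> 0"
    using assms(3) by (metis mult_zero_right zero_neq_one)
  with assms(3) have "C = 1 / (\<Prod>j<k. Beta (\<alpha> j) (\<gamma> j))"
    by (simp add: eq_divide_eq)
  then have "(\<Prod>j<k. Gamma (\<alpha> j) / Gamma (\<alpha> j + \<gamma> j)) * C
      = (\<Prod>j<k. Gamma (\<alpha> j) / Gamma (\<alpha> j + \<gamma> j) / Beta (\<alpha> j) (\<gamma> j))"
    by (simp only: prod_dividef) simp
  also have "\<dots> = (\<Prod>j<k. 1 / Gamma (\<gamma> j))"
  proof (intro prod.cong refl)
    fix j assume "j \<in> {..<k}"
    then have "0 < Gamma (\<alpha> j)" "0 < Gamma (\<gamma> j)" "0 < Gamma (\<alpha> j + \<gamma> j)"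
      using assms(1,2) by (auto intro!: Gamma_real_pos add_pos_pos)
    then show "Gamma (\<alpha> j) / Gamma (\<alpha> j + \<gamma> j) / Beta (\<alpha> j) (\<gamma> j) = 1 / Gamma (\<gamma> j)"
      by (simp add: Beta_def field_simps)
  qed
  finally show ?thesis .
qed

theorem theorem2p5:
  fixes M :: "'s measure"
    and k :: nat and \<alpha> \<beta> :: "nat \<Rightarrow> real" and C1 :: real
    and x v :: "'s \<Rightarrow> nat \<Rightarrow> real"
    and f g :: "(nat \<Rightarrow> real) \<Rightarrow> real"
  assumes "prob_space M"
    and "k \<ge> 1"
    and "\<And>j. j < k \<Longrightarrow> \<alpha> j > 0"
    and "\<And>j. j < k \<Longrightarrow> kgamma k \<alpha> \<beta> j > 0"
    and "distributed M (RK k) x (\<lambda>z. ennreal (dens1 k \<alpha> \<beta> C1 z))"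
    and "\<And>z. 0 \<le> f z"
    and "\<And>z. z \<in> space (RK k) \<Longrightarrow> (\<exists>j<k. z j \<le> 0) \<Longrightarrow> f z = 0"
    and "distributed M (RK k) v (\<lambda>z. ennreal (f z))"
    and "prob_space.indep_var M (RK k) x (RK k) v"
    and "\<And>z. 0 \<le> g z"
    and "distributed M (RK k)
           (\<lambda>\<omega>. \<lambda>j\<in>{..<k}. v \<omega> j / (x \<omega> j / (1 - (\<Sum>i<j. x \<omega> i))))
           (\<lambda>z. ennreal (g z))"
  shows "AE u in RK k. (\<forall>j<k. 0 < u j) \<longrightarrow>
           kober k \<alpha> (kgamma k \<alpha> \<beta>) f u
             = ennreal (\<Prod>j<k. Gamma (\<alpha> j) / Gamma (\<alpha> j + kgamma k \<alpha> \<beta> j)) * ennreal (g u)"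
proof -
  have f_measurable: "f \<in> borel_measurable (RK k)"
    using assms(8,6) by (rule distributed_nonneg_density_measurable)
  have "C1 * (\<Prod>j<k. Beta (\<alpha> j) (kgamma k \<alpha> \<beta> j)) = 1"
    using assms(1,5,3,4) by (rule dens1_normalization)
  then have Gamma_eq: "(\<Prod>j<k. Gamma (\<alpha> j) / Gamma (\<alpha> j + kgamma k \<alpha> \<beta> j)) * C1
      = (\<Prod>j<k. 1 / Gamma (kgamma k \<alpha> \<beta> j))"
    using assms(3,4) by (intro prod_Gamma_ratio_mult_eq) auto
  have "0 < (\<Prod>j<k. Gamma (\<alpha> j) / Gamma (\<alpha> j + kgamma k \<alpha> \<beta> j))"
    using assms(3,4) by (auto intro!: prod_pos divide_pos_pos Gamma_real_pos add_pos_pos)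
  from AE_ratio_density_eq[OF assms(1,5,6,8,9,11)] show ?thesis
  proof (rule AE_mp, intro AE_I2 impI)
    fix u
    assume g_eq: "ennreal (g u) = ennreal C1 * (\<integral>\<^sup>+y. ennreal (beta_product_density k \<alpha> (kgamma k \<alpha> \<beta>) y
        * f (\<lambda>j\<in>{..<k}. y j * u j) * (\<Prod>j<k. \<bar>y j\<bar>)) \<partial>RK k)"
      and "\<forall>j<k. 0 < u j"
    then have "kober k \<alpha> (kgamma k \<alpha> \<beta>) f u = ennreal (\<Prod>j<k. 1 / Gamma (kgamma k \<alpha> \<beta> j))
        * (\<integral>\<^sup>+y. ennreal (beta_product_density k \<alpha> (kgamma k \<alpha> \<beta>) y
            * f (\<lambda>j\<in>{..<k}. y j * u j) * (\<Prod>j<k. \<bar>y j\<bar>)) \<partial>RK k)"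
      using f_measurable assms(6) by (intro kober_eq_beta_mixture) auto
    with \<open>0 < _\<close> show "kober k \<alpha> (kgamma k \<alpha> \<beta>) f u
        = ennreal (\<Prod>j<k. Gamma (\<alpha> j) / Gamma (\<alpha> j + kgamma k \<alpha> \<beta> j)) * ennreal (g u)"
      unfolding g_eq Gamma_eq[symmetric] by (simp add: ennreal_mult' less_imp_le mult.assoc)
  qed
qed

end
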